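(* Assume $q^{2d}\neq1$ for all integers $d\ge1$. The algebra of universal invariants of the universal linear form, i.e. the subalgebra $\{\mathcal I\in\mathbb C\langle\mathcal A,\mathcal B\rangle : E\mathcal I=F\mathcal I=0,\ K\mathcal I=\mathcal I\}$ of the free algebra on $\mathcal A,\mathcal B$, has no finite set of generators.
   Context: Fix $q\in\mathbb C$ with $|q|=1$, $q\neq\pm1,\pm i$, and a square root $q^{1/2}$. $\mathbb C\langle\mathcal A,\mathcal B\rangle$ is the free associative algebra on two variables (the coefficients of the universal linear form $x\mathcal A+y\mathcal B$), with the action $K\mathcal A=q^{1/2}\mathcal A$, $K\mathcal B=q^{-1/2}\mathcal B$, $E\mathcal A=0$, $E\mathcal B=-q^{3/2}\mathcal A$, $F\mathcal A=-q^{-3/2}\mathcal B$, $F\mathcal B=0$, $K1=1$, $E1=F1=0$, extended by $K(ab)=K(a)K(b)$, $E(ab)=E(a)K(b)+K^{-1}(a)E(b)$, $F(ab)=F(a)K(b)+K^{-1}(a)F(b)$. *)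

theory Defs
  imports Complex_Main
begin

text \<open>The free algebra C<A,B>: elements are finitely supported functions from words
  (lists over bool; False stands for the generator A, True for B) to complex numbers.\<close>

type_synonym word = "bool list"
type_synonym freealg = "word \<Rightarrow> complex"

definition FA :: "freealg set" where
  "FA = {f. finite {w. f w \<noteq> 0}}"

definition mono :: "word \<Rightarrow> freealg" where
  "mono w = (\<lambda>v. if v = w then 1 else 0)"

definition fa_mul :: "freealg \<Rightarrow> freealg \<Rightarrow> freealg" where
  "fa_mul f g = (\<lambda>w. \<Sum>i\<le>length w. f (take i w) * g (drop i w))"

definition fa_smult :: "complex \<Rightarrow> freealg \<Rightarrow> freealg" where
  "fa_smult c f = (\<lambda>w. c * f w)"

definition lin_ext :: "(word \<Rightarrow> freealg) \<Rightarrow> freealg \<Rightarrow> freealg" where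
  "lin_ext T f = (\<lambda>v. \<Sum>w\<in>{w. f w \<noteq> 0}. f w * T w v)"

text \<open>Weight of a word under K, where s is the chosen square root q^(1/2):
  K A = s A, K B = s^(-1) B, K multiplicative.\<close>
primrec kwt :: "complex \<Rightarrow> word \<Rightarrow> complex" where
  "kwt s [] = 1"
| "kwt s (x # w) = (if x then inverse s else s) * kwt s w"

definition Kw :: "complex \<Rightarrow> word \<Rightarrow> freealg" where
  "Kw s w = fa_smult (kwt s w) (mono w)"

definition Kinvw :: "complex \<Rightarrow> word \<Rightarrow> freealg" where
  "Kinvw s w = fa_smult (inverse (kwt s w)) (mono w)"

definition Eletter :: "complex \<Rightarrow> bool \<Rightarrow> freealg" where
  "Eletter s x = (if x then fa_smult (- (s ^ 3)) (mono [False]) else (\<lambda>_. 0))"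

definition Fletter :: "complex \<Rightarrow> bool \<Rightarrow> freealg" where
  "Fletter s x = (if x then (\<lambda>_. 0) else fa_smult (- inverse (s ^ 3)) (mono [True]))"

text \<open>E(ab) = E(a)K(b) + K^{-1}(a)E(b), applied letter by letter; E 1 = 0.\<close>
primrec Ew :: "complex \<Rightarrow> word \<Rightarrow> freealg" where
  "Ew s [] = (\<lambda>_. 0)"
| "Ew s (x # w) = (\<lambda>v. fa_mul (Eletter s x) (Kw s w) v + fa_mul (Kinvw s [x]) (Ew s w) v)"

primrec Fw :: "complex \<Rightarrow> word \<Rightarrow> freealg" where
  "Fw s [] = (\<lambda>_. 0)"
| "Fw s (x # w) = (\<lambda>v. fa_mul (Fletter s x) (Kw s w) v + fa_mul (Kinvw s [x]) (Fw s w) v)"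

definition Kop :: "complex \<Rightarrow> freealg \<Rightarrow> freealg" where
  "Kop s = lin_ext (Kw s)"

definition Eop :: "complex \<Rightarrow> freealg \<Rightarrow> freealg" where
  "Eop s = lin_ext (Ew s)"

definition Fop :: "complex \<Rightarrow> freealg \<Rightarrow> freealg" where
  "Fop s = lin_ext (Fw s)"

definition invariants :: "complex \<Rightarrow> freealg set" where
  "invariants s = {I \<in> FA. Eop s I = (\<lambda>_. 0) \<and> Fop s I = (\<lambda>_. 0) \<and> Kop s I = I}"

inductive_set gen_alg :: "freealg set \<Rightarrow> freealg set" for G where
  gen: "g \<in> G \<Longrightarrow> g \<in> gen_alg G"
| one: "mono [] \<in> gen_alg G"
| add: "f \<in> gen_alg G \<Longrightarrow> g \<in> gen_alg G \<Longrightarrow> (\<lambda>w. f w + g w) \<in> gen_alg G"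
| smult: "f \<in> gen_alg G \<Longrightarrow> fa_smult c f \<in> gen_alg G"
| mult: "f \<in> gen_alg G \<Longrightarrow> g \<in> gen_alg G \<Longrightarrow> fa_mul f g \<in> gen_alg G"

end

theory Submission
  imports Defs
begin

text \<open>
  K multiplies a word with a letters A and b letters B by s^(a - b), and s is not a root
  of unity, so every invariant is supported on balanced words (a = b).
  The elements I_0 = 1, I_(n+1) = q A I_n B - B I_n A are invariants, and the word A^n B^n
  occurs in I_n with coefficient q^n.
  No proper nonempty prefix of A^n B^n is balanced, so A^n B^n cannot arise as a product of
  balanced elements unless one factor already contains it.  Hence in the algebra generated
  by finitely many invariants, all supported on words of length at most N, the coefficient
  of A^n B^n vanishes as soon as 2n > N.
\<close>

section \<open>Multiplication by a generator\<close>

definition lmul :: "bool \<Rightarrow> freealg \<Rightarrow> freealg" where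
  "lmul a h = (\<lambda>v. case v of [] \<Rightarrow> 0 | y # v' \<Rightarrow> if y = a then h v' else 0)"

definition rmul :: "bool \<Rightarrow> freealg \<Rightarrow> freealg" where
  "rmul b h = (\<lambda>v. if v \<noteq> [] \<and> last v = b then h (butlast v) else 0)"

lemma lmul_Nil [simp]: "lmul a h [] = 0"
  by (simp add: lmul_def)

lemma lmul_Cons [simp]: "lmul a h (y # v) = (if y = a then h v else 0)"
  by (simp add: lmul_def)

lemma rmul_Nil [simp]: "rmul b h [] = 0"
  by (simp add: rmul_def)

lemma rmul_snoc [simp]: "rmul b h (v @ [y]) = (if y = b then h v else 0)"
  by (simp add: rmul_def)

lemma lmul_pointwise [simp]:
  "lmul a (\<lambda>w. f w + g w) v = lmul a f v + lmul a g v"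
  "lmul a (\<lambda>w. - f w) v = - lmul a f v"
  "lmul a (\<lambda>w. c * f w) v = c * lmul a f v"
  "lmul a (\<lambda>w. f w * c) v = lmul a f v * c"
  "lmul a (\<lambda>w. if P then f w else 0) v = (if P then lmul a f v else 0)"
  "lmul a (\<lambda>w. 0) v = 0"
  by (cases v; simp)+

lemma rmul_pointwise [simp]:
  "rmul b (\<lambda>w. f w + g w) v = rmul b f v + rmul b g v"
  "rmul b (\<lambda>w. - f w) v = - rmul b f v"
  "rmul b (\<lambda>w. c * f w) v = c * rmul b f v"
  "rmul b (\<lambda>w. f w * c) v = rmul b f v * c"
  "rmul b (\<lambda>w. if P then f w else 0) v = (if P then rmul b f v else 0)"
  "rmul b (\<lambda>w. 0) v = 0"
  by (cases v rule: rev_cases; simp)+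

lemma lmul_sum: "(\<Sum>u\<in>S. c u * lmul a (h u) v) = lmul a (\<lambda>w. \<Sum>u\<in>S. c u * h u w) v"
  by (cases v) (auto simp: sum.If_cases)

lemma rmul_sum: "(\<Sum>u\<in>S. c u * rmul b (h u) v) = rmul b (\<lambda>w. \<Sum>u\<in>S. c u * h u w) v"
  by (cases v rule: rev_cases) auto

lemma lmul_mono: "lmul a (mono w) = mono (a # w)"
proof
  fix v
  show "lmul a (mono w) v = mono (a # w) v" by (cases v) (auto simp: mono_def)
qed

lemma rmul_mono: "rmul b (mono w) = mono (w @ [b])"
proof
  fix v
  show "rmul b (mono w) v = mono (w @ [b]) v" by (cases v rule: rev_cases) (auto simp: mono_def)
qed

lemma lmul_rmul_commute: "lmul a (rmul b h) = rmul b (lmul a h)"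
proof
  fix v
  show "lmul a (rmul b h) v = rmul b (lmul a h) v"
  proof (cases v)
    case (Cons y v')
    then show ?thesis
      by (cases v' rule: rev_cases) (simp_all add: rmul_def)
  qed simp
qed

lemma fa_mul_smult: "fa_mul (fa_smult c f) g v = c * fa_mul f g v"
  by (simp add: fa_mul_def fa_smult_def sum_distrib_left mult.assoc)

lemma fa_mul_zero_left: "fa_mul (\<lambda>_. 0) g = (\<lambda>_. 0)"
  by (simp add: fa_mul_def)

lemma fa_mul_mono_letter: "fa_mul (mono [a]) g = lmul a g"
proof
  fix v
  have summand: "mono [a] (take i v) * g (drop i v) = (if i = 1 then lmul a g v else 0)"
    if "i \<le> length v" for i
    using that by (cases v; cases i) (auto simp: mono_def)
  have "fa_mul (mono [a]) g v = (\<Sum>i\<le>length v. if i = 1 then lmul a g v else 0)"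
    unfolding fa_mul_def by (rule sum.cong) (simp_all add: summand)
  also have "\<dots> = (if 1 \<le> length v then lmul a g v else 0)"
    by (subst sum.delta) simp_all
  finally show "fa_mul (mono [a]) g v = lmul a g v"
    by (cases v) simp_all
qed

lemma supp_lmul: "{w. lmul a g w \<noteq> 0} = Cons a ` {w. g w \<noteq> 0}"
proof (intro set_eqI iffI)
  fix w assume "w \<in> {w. lmul a g w \<noteq> 0}"
  then show "w \<in> Cons a ` {w. g w \<noteq> 0}"
    by (cases w) (auto split: if_splits)
qed auto

lemma supp_rmul: "{w. rmul b g w \<noteq> 0} = (\<lambda>u. u @ [b]) ` {w. g w \<noteq> 0}"
proof (intro set_eqI iffI)
  fix w assume "w \<in> {w. rmul b g w \<noteq> 0}"
  then show "w \<in> (\<lambda>u. u @ [b]) ` {w. g w \<noteq> 0}"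
    by (cases w rule: rev_cases) (auto split: if_splits)
qed auto

lemma FA_lmul: "g \<in> FA \<Longrightarrow> lmul a g \<in> FA"
  by (simp add: FA_def supp_lmul)

lemma FA_rmul: "g \<in> FA \<Longrightarrow> rmul b g \<in> FA"
  by (simp add: FA_def supp_rmul)

lemma FA_lincomb: "f \<in> FA \<Longrightarrow> g \<in> FA \<Longrightarrow> (\<lambda>v. c * f v - d * g v) \<in> FA"
  unfolding FA_def mem_Collect_eq
  by (rule finite_subset[of _ "{w. f w \<noteq> 0} \<union> {w. g w \<noteq> 0}"]) auto

lemma FA_mono: "mono w \<in> FA"
  by (simp add: FA_def mono_def)

section \<open>The action of K, E and F\<close>

lemma kwt_append: "kwt s (u @ w) = kwt s u * kwt s w"
  by (induction u) auto

lemma kwt_lmul: "kwt s w * lmul a h w = kwt s [a] * lmul a (\<lambda>u. kwt s u * h u) w"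
  by (cases w) auto

lemma kwt_rmul: "kwt s w * rmul b h w = kwt s [b] * rmul b (\<lambda>u. kwt s u * h u) w"
  by (cases w rule: rev_cases) (auto simp: kwt_append)

lemma Kw_eq: "Kw s w = (\<lambda>v. kwt s w * mono w v)"
  by (simp add: Kw_def fa_smult_def)

lemma Ew_Cons_eq:
  "Ew s (x # w) = (\<lambda>v. (if x then - (s ^ 3) * kwt s w * mono (False # w) v else 0)
                        + inverse (kwt s [x]) * lmul x (Ew s w) v)"
  by (rule ext) (auto simp: Eletter_def Kinvw_def Kw_eq fa_mul_smult fa_mul_zero_left
                            fa_mul_mono_letter lmul_mono)

lemma Fw_Cons_eq:
  "Fw s (x # w) = (\<lambda>v. (if x then 0 else - inverse (s ^ 3) * kwt s w * mono (True # w) v)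
                        + inverse (kwt s [x]) * lmul x (Fw s w) v)"
  by (rule ext) (auto simp: Fletter_def Kinvw_def Kw_eq fa_mul_smult fa_mul_zero_left
                            fa_mul_mono_letter lmul_mono)

lemma Ew_snoc:
  "Ew s (u @ [b]) = (\<lambda>v. kwt s [b] * rmul b (Ew s u) v
                        + (if b then - (s ^ 3) * inverse (kwt s u) * mono (u @ [False]) v else 0))"
proof (induction u)
  case Nil
  show ?case by (rule ext) (simp add: Ew_Cons_eq del: Ew.simps(2))
next
  case (Cons x u)
  show ?case
    by (rule ext, simp del: Ew.simps(2) add: Ew_Cons_eq Cons lmul_rmul_commute lmul_mono rmul_mono kwt_append,
        simp add: algebra_simps)
qed

lemma Fw_snoc:
  "Fw s (u @ [b]) = (\<lambda>v. kwt s [b] * rmul b (Fw s u) v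
                        + (if b then 0 else - inverse (s ^ 3) * inverse (kwt s u) * mono (u @ [True]) v))"
proof (induction u)
  case Nil
  show ?case by (rule ext) (simp add: Fw_Cons_eq del: Fw.simps(2))
next
  case (Cons x u)
  show ?case
    by (rule ext, simp del: Fw.simps(2) add: Fw_Cons_eq Cons lmul_rmul_commute lmul_mono rmul_mono kwt_append,
        simp add: algebra_simps)
qed

lemma sum_times_mono:
  assumes "finite S" "{w. g w \<noteq> 0} \<subseteq> S"
  shows "(\<Sum>u\<in>S. g u * (c u * mono u v)) = c v * g v"
proof -
  have "(\<Sum>u\<in>S. g u * (c u * mono u v)) = (\<Sum>u\<in>S. if u = v then g v * c v else 0)"
    by (intro sum.cong) (auto simp: mono_def)
  also have "\<dots> = c v * g v"
    using assms by (auto simp: sum.delta')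
  finally show ?thesis .
qed

lemma Kop_eq: "g \<in> FA \<Longrightarrow> Kop s g = (\<lambda>v. kwt s v * g v)"
  unfolding Kop_def lin_ext_def Kw_eq by (rule ext, rule sum_times_mono) (auto simp: FA_def)

lemma lin_ext_mono: "lin_ext T (mono w) = T w"
proof
  fix v
  have "{u. mono w u \<noteq> 0} = {w}" by (auto simp: mono_def)
  then show "lin_ext T (mono w) v = T w v" by (simp add: lin_ext_def mono_def)
qed

lemma lin_ext_superset:
  assumes "finite S" "{w. g w \<noteq> 0} \<subseteq> S"
  shows "lin_ext T g v = (\<Sum>u\<in>S. g u * T u v)"
  unfolding lin_ext_def using assms by (intro sum.mono_neutral_left) auto

lemma lin_ext_lincomb:
  assumes "f \<in> FA" "g \<in> FA"
  shows "lin_ext T (\<lambda>v. c * f v - d * g v) v = c * lin_ext T f v - d * lin_ext T g v"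
proof -
  let ?S = "{w. f w \<noteq> 0} \<union> {w. g w \<noteq> 0}"
  have fin: "finite ?S" using assms by (simp add: FA_def)
  have "lin_ext T (\<lambda>v. c * f v - d * g v) v = (\<Sum>u\<in>?S. (c * f u - d * g u) * T u v)"
    "lin_ext T f v = (\<Sum>u\<in>?S. f u * T u v)" "lin_ext T g v = (\<Sum>u\<in>?S. g u * T u v)"
    by (rule lin_ext_superset[OF fin]; auto)+
  then show ?thesis by (simp add: algebra_simps sum_subtractf sum_distrib_left)
qed

lemma lin_ext_lmul: "lin_ext T (lmul a g) v = (\<Sum>u\<in>{w. g w \<noteq> 0}. g u * T (a # u) v)"
  unfolding lin_ext_def supp_lmul by (subst sum.reindex) (auto simp: inj_on_def)

lemma lin_ext_rmul: "lin_ext T (rmul b g) v = (\<Sum>u\<in>{w. g w \<noteq> 0}. g u * T (u @ [b]) v)"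
  unfolding lin_ext_def supp_rmul by (subst sum.reindex) (auto simp: inj_on_def)

lemma lin_ext_lmul_eq:
  assumes g: "g \<in> FA"
    and T: "\<And>u v. T (a # u) v = \<alpha> * \<beta> u * mono (a' # u) v + \<gamma> * lmul a (T u) v"
  shows "lin_ext T (lmul a g) v = \<alpha> * lmul a' (\<lambda>w. \<beta> w * g w) v + \<gamma> * lmul a (lin_ext T g) v"
proof -
  let ?S = "{w. g w \<noteq> 0}"
  have fin: "finite ?S" using g by (simp add: FA_def)
  have "lin_ext T (lmul a g) v = (\<Sum>u\<in>?S. g u * T (a # u) v)" by (rule lin_ext_lmul)
  also have "\<dots> = \<alpha> * (\<Sum>u\<in>?S. g u * lmul a' (\<lambda>w. \<beta> u * mono u w) v)
                  + \<gamma> * (\<Sum>u\<in>?S. g u * lmul a (T u) v)"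
    by (simp add: T lmul_mono algebra_simps sum.distrib sum_distrib_left)
  also have "(\<Sum>u\<in>?S. g u * lmul a' (\<lambda>w. \<beta> u * mono u w) v) = lmul a' (\<lambda>w. \<beta> w * g w) v"
    unfolding lmul_sum using fin by (simp add: sum_times_mono)
  also have "(\<Sum>u\<in>?S. g u * lmul a (T u) v) = lmul a (lin_ext T g) v"
    by (simp add: lmul_sum lin_ext_def)
  finally show ?thesis .
qed

lemma lin_ext_rmul_eq:
  assumes g: "g \<in> FA"
    and T: "\<And>u v. T (u @ [b]) v = \<gamma> * rmul b (T u) v + \<alpha> * \<beta> u * mono (u @ [b']) v"
  shows "lin_ext T (rmul b g) v = \<gamma> * rmul b (lin_ext T g) v + \<alpha> * rmul b' (\<lambda>w. \<beta> w * g w) v"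
proof -
  let ?S = "{w. g w \<noteq> 0}"
  have fin: "finite ?S" using g by (simp add: FA_def)
  have "lin_ext T (rmul b g) v = (\<Sum>u\<in>?S. g u * T (u @ [b]) v)" by (rule lin_ext_rmul)
  also have "\<dots> = \<gamma> * (\<Sum>u\<in>?S. g u * rmul b (T u) v)
                  + \<alpha> * (\<Sum>u\<in>?S. g u * rmul b' (\<lambda>w. \<beta> u * mono u w) v)"
    by (simp add: T rmul_mono algebra_simps sum.distrib sum_distrib_left)
  also have "(\<Sum>u\<in>?S. g u * rmul b' (\<lambda>w. \<beta> u * mono u w) v) = rmul b' (\<lambda>w. \<beta> w * g w) v"
    unfolding rmul_sum using fin by (simp add: sum_times_mono)
  also have "(\<Sum>u\<in>?S. g u * rmul b (T u) v) = rmul b (lin_ext T g) v"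
    by (simp add: rmul_sum lin_ext_def)
  finally show ?thesis .
qed

lemma Eop_lmul:
  "g \<in> FA \<Longrightarrow> Eop s (lmul a g) v =
     (if a then - (s ^ 3) else 0) * lmul False (\<lambda>w. kwt s w * g w) v + inverse (kwt s [a]) * lmul a (Eop s g) v"
  unfolding Eop_def by (rule lin_ext_lmul_eq) (auto simp del: Ew.simps(2) simp add: Ew_Cons_eq)

lemma Eop_rmul:
  "g \<in> FA \<Longrightarrow> Eop s (rmul b g) v =
     kwt s [b] * rmul b (Eop s g) v + (if b then - (s ^ 3) else 0) * rmul False (\<lambda>w. inverse (kwt s w) * g w) v"
  unfolding Eop_def by (rule lin_ext_rmul_eq) (auto simp del: Ew.simps(2) simp add: Ew_snoc)

lemma Fop_lmul:
  "g \<in> FA \<Longrightarrow> Fop s (lmul a g) v =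
     (if a then 0 else - inverse (s ^ 3)) * lmul True (\<lambda>w. kwt s w * g w) v + inverse (kwt s [a]) * lmul a (Fop s g) v"
  unfolding Fop_def by (rule lin_ext_lmul_eq) (auto simp del: Fw.simps(2) simp add: Fw_Cons_eq)

lemma Fop_rmul:
  "g \<in> FA \<Longrightarrow> Fop s (rmul b g) v =
     kwt s [b] * rmul b (Fop s g) v + (if b then 0 else - inverse (s ^ 3)) * rmul True (\<lambda>w. inverse (kwt s w) * g w) v"
  unfolding Fop_def by (rule lin_ext_rmul_eq) (auto simp del: Fw.simps(2) simp add: Fw_snoc)

section \<open>The invariants I_n\<close>

lemma invariant_weight:
  assumes "g \<in> invariants s"
  shows "(\<lambda>w. kwt s w * g w) = g" and "(\<lambda>w. inverse (kwt s w) * g w) = g"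
proof -
  have "Kop s g = g" "g \<in> FA" using assms by (auto simp: invariants_def)
  then show weight: "(\<lambda>w. kwt s w * g w) = g" by (simp add: Kop_eq)
  show "(\<lambda>w. inverse (kwt s w) * g w) = g"
  proof
    fix w
    have "kwt s w * g w = g w" using weight by metis
    then show "inverse (kwt s w) * g w = g w" by (cases "g w = 0") auto
  qed
qed

definition qbracket :: "complex \<Rightarrow> freealg \<Rightarrow> freealg" where
  "qbracket s g = (\<lambda>v. s ^ 2 * lmul False (rmul True g) v - lmul True (rmul False g) v)"

lemma qbracket_lincomb: "qbracket s g = (\<lambda>v. s ^ 2 * lmul False (rmul True g) v - 1 * lmul True (rmul False g) v)"
  by (simp add: qbracket_def)

lemma FA_qbracket: "g \<in> FA \<Longrightarrow> qbracket s g \<in> FA"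
  unfolding qbracket_lincomb by (intro FA_lincomb FA_lmul FA_rmul)

lemma Kop_qbracket:
  assumes "s \<noteq> 0" "g \<in> invariants s"
  shows "Kop s (qbracket s g) = qbracket s g"
proof -
  have "g \<in> FA" using assms(2) by (simp add: invariants_def)
  note weight = invariant_weight(1)[OF assms(2)]
  have "kwt s w * qbracket s g w = qbracket s g w" for w
  proof -
    have "kwt s w * qbracket s g w
        = s ^ 2 * (kwt s w * lmul False (rmul True g) w) - kwt s w * lmul True (rmul False g) w"
      by (simp add: qbracket_def algebra_simps)
    also have "\<dots> = qbracket s g w"
      using assms(1) by (simp add: qbracket_def kwt_lmul kwt_rmul weight) (simp add: field_simps)
    finally show ?thesis .
  qed
  then show ?thesis
    unfolding Kop_eq[OF FA_qbracket[OF \<open>g \<in> FA\<close>]] by (rule ext)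
qed

lemma Eop_qbracket:
  assumes "s \<noteq> 0" "g \<in> invariants s"
  shows "Eop s (qbracket s g) = (\<lambda>_. 0)"
proof
  fix v
  have g_inv: "g \<in> FA" "Eop s g = (\<lambda>_. 0)" using assms(2) by (auto simp: invariants_def)
  have lmul_rmul_FA: "lmul a (rmul b g) \<in> FA" for a b using g_inv(1) by (intro FA_lmul FA_rmul)
  note weight = invariant_weight[OF assms(2)]
  have "Eop s (rmul True g) = (\<lambda>w. - (s ^ 3) * rmul False g w)"
    by (rule ext) (simp add: Eop_rmul g_inv weight)
  then have "Eop s (lmul False (rmul True g)) v = - (s ^ 2) * lmul False (rmul False g) v"
    using assms(1) by (simp add: Eop_lmul FA_rmul g_inv power3_eq_cube power2_eq_square field_simps)
  moreover have "Eop s (rmul False g) = (\<lambda>_. 0)"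
    by (rule ext) (simp add: Eop_rmul g_inv)
  then have "Eop s (lmul True (rmul False g)) v = - (s ^ 4) * lmul False (rmul False g) v"
    by (simp add: Eop_lmul FA_rmul g_inv kwt_rmul[of s _ False] weight power3_eq_cube power4_eq_xxxx)
  ultimately show "Eop s (qbracket s g) v = 0"
    unfolding qbracket_lincomb Eop_def lin_ext_lincomb[OF lmul_rmul_FA lmul_rmul_FA]
    by (simp add: Eop_def power2_eq_square power4_eq_xxxx)
qed

lemma Fop_qbracket:
  assumes "s \<noteq> 0" "g \<in> invariants s"
  shows "Fop s (qbracket s g) = (\<lambda>_. 0)"
proof
  fix v
  have g_inv: "g \<in> FA" "Fop s g = (\<lambda>_. 0)" using assms(2) by (auto simp: invariants_def)
  have lmul_rmul_FA: "lmul a (rmul b g) \<in> FA" for a b using g_inv(1) by (intro FA_lmul FA_rmul)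
  note weight = invariant_weight[OF assms(2)]
  have "Fop s (rmul True g) = (\<lambda>_. 0)"
    by (rule ext) (simp add: Fop_rmul g_inv)
  then have "Fop s (lmul False (rmul True g)) v = - inverse (s ^ 4) * lmul True (rmul True g) v"
    using assms(1) by (simp add: Fop_lmul FA_rmul g_inv kwt_rmul[of s _ True] weight)
                      (simp add: power3_eq_cube power4_eq_xxxx field_simps)
  moreover have "Fop s (rmul False g) = (\<lambda>w. - inverse (s ^ 3) * rmul True g w)"
    by (rule ext) (simp add: Fop_rmul g_inv weight)
  then have "Fop s (lmul True (rmul False g)) v = - inverse (s ^ 2) * lmul True (rmul True g) v"
    using assms(1) by (simp add: Fop_lmul FA_rmul g_inv)
                      (simp add: power3_eq_cube power2_eq_square field_simps)
  ultimately show "Fop s (qbracket s g) v = 0"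
    unfolding qbracket_lincomb Fop_def lin_ext_lincomb[OF lmul_rmul_FA lmul_rmul_FA]
    using assms(1) by (simp add: Fop_def) (simp add: power2_eq_square power4_eq_xxxx field_simps)
qed

lemma qbracket_in_invariants:
  assumes "s \<noteq> 0" "g \<in> invariants s"
  shows "qbracket s g \<in> invariants s"
  using assms FA_qbracket Kop_qbracket Eop_qbracket Fop_qbracket
  unfolding invariants_def by blast

lemma one_in_invariants: "mono [] \<in> invariants s"
  by (simp add: invariants_def FA_mono Eop_def Fop_def Kop_def lin_ext_mono Kw_def fa_smult_def)

primrec nested_invariant :: "complex \<Rightarrow> nat \<Rightarrow> freealg" where
  "nested_invariant s 0 = mono []"
| "nested_invariant s (Suc n) = qbracket s (nested_invariant s n)"

lemma nested_invariant_in_invariants: "s \<noteq> 0 \<Longrightarrow> nested_invariant s n \<in> invariants s"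
  by (induction n) (simp_all add: one_in_invariants qbracket_in_invariants)

definition an_bn :: "nat \<Rightarrow> word" where
  "an_bn n = replicate n False @ replicate n True"

lemma an_bn_Suc: "an_bn (Suc n) = False # an_bn n @ [True]"
  by (simp add: an_bn_def replicate_append_same)

lemma nested_invariant_an_bn: "nested_invariant s n (an_bn n) = s ^ (2 * n)"
proof (induction n)
  case 0
  show ?case by (simp add: an_bn_def mono_def)
next
  case (Suc n)
  then show ?case
    by (simp add: an_bn_Suc qbracket_def power_mult power2_eq_square del: append_Cons)
qed

section \<open>Balanced words\<close>

definition balanced :: "word \<Rightarrow> bool" where
  "balanced w \<longleftrightarrow> count_list w False = count_list w True"

lemma kwt_eq_count_list: "kwt s w = s ^ count_list w False * inverse s ^ count_list w True"
  by (induction w) auto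

lemma power_inject_exp_not_root_of_unity:
  fixes s :: "'a::field"
  assumes "s \<noteq> 0" and no_root: "\<forall>d\<ge>1. s ^ d \<noteq> 1" and "s ^ m = s ^ n"
  shows "m = n"
proof -
  have le: "m \<le> n" if "s ^ m = s ^ n" "n \<le> m" for m n
  proof (rule ccontr)
    assume "\<not> m \<le> n"
    have "s ^ n * s ^ (m - n) = s ^ n * 1"
      using that by (simp flip: power_add)
    then have "s ^ (m - n) = 1" using assms(1) by simp
    moreover have "m - n \<ge> 1" using \<open>\<not> m \<le> n\<close> by simp
    ultimately show False using no_root by blast
  qed
  show ?thesis
  proof (cases "n \<le> m")
    case True
    then show ?thesis using le[of m n] assms(3) by simp
  next
    case False
    then show ?thesis using le[of n m] assms(3) by simp
  qed
qed

lemma balanced_if_kwt_eq_1: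
  fixes s :: complex
  assumes "s \<noteq> 0" "\<forall>d\<ge>1. s ^ d \<noteq> 1" "kwt s w = 1"
  shows "balanced w"
proof -
  have "s ^ count_list w False = s ^ count_list w True"
    using assms(1,3) by (simp add: kwt_eq_count_list power_inverse field_simps)
  then show ?thesis
    unfolding balanced_def by (rule power_inject_exp_not_root_of_unity[OF assms(1,2)])
qed

lemma invariant_supp_balanced:
  fixes s :: complex
  assumes "s \<noteq> 0" "\<forall>d\<ge>1. s ^ d \<noteq> 1" "I \<in> invariants s" "I w \<noteq> 0"
  shows "balanced w"
proof -
  have "kwt s w * I w = I w" using invariant_weight(1)[OF assms(3)] by metis
  then show ?thesis using assms(4) by (intro balanced_if_kwt_eq_1[OF assms(1,2)]) simp
qed

lemma fa_mul_supp_balanced: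
  assumes "\<forall>w. f w \<noteq> 0 \<longrightarrow> balanced w" "\<forall>w. g w \<noteq> 0 \<longrightarrow> balanced w" "fa_mul f g w \<noteq> 0"
  shows "balanced w"
proof -
  obtain i where "f (take i w) * g (drop i w) \<noteq> 0"
    using assms(3) unfolding fa_mul_def by (rule sum.not_neutral_contains_not_neutral)
  then have "f (take i w) \<noteq> 0" "g (drop i w) \<noteq> 0" by auto
  then have "balanced (take i w)" "balanced (drop i w)" using assms(1,2) by auto
  then show ?thesis
    using count_list_append[of "take i w" "drop i w"] by (simp add: balanced_def del: count_list_append)
qed

lemma take_an_bn_not_balanced:
  assumes "0 < i" "i < 2 * n"
  shows "\<not> balanced (take i (an_bn n))"
proof -
  have "take i (an_bn n) = replicate (min i n) False @ replicate (min (i - n) n) True"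
    by (simp add: an_bn_def take_append)
  then show ?thesis using assms by (simp add: balanced_def count_list_eq_length_filter)
qed

lemma fa_mul_an_bn:
  assumes "\<forall>w. f w \<noteq> 0 \<longrightarrow> balanced w" "f (an_bn n) = 0" "g (an_bn n) = 0"
  shows "fa_mul f g (an_bn n) = 0"
  unfolding fa_mul_def
proof (rule sum.neutral, rule ballI)
  fix i assume "i \<in> {..length (an_bn n)}"
  then consider "i = 0" | "i = 2 * n" | "0 < i" "i < 2 * n"
    by (force simp: an_bn_def)
  then show "f (take i (an_bn n)) * g (drop i (an_bn n)) = 0"
    using assms take_an_bn_not_balanced by cases (auto simp: an_bn_def)
qed

lemma gen_alg_supp_balanced:
  assumes "\<forall>g\<in>G. \<forall>w. g w \<noteq> 0 \<longrightarrow> balanced w" "f \<in> gen_alg G"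
  shows "\<forall>w. f w \<noteq> 0 \<longrightarrow> balanced w"
  using assms(2)
proof (induction rule: gen_alg.induct)
  case (gen g)
  then show ?case using assms(1) by blast
next
  case one
  show ?case by (simp add: mono_def balanced_def)
next
  case (add f g)
  then show ?case by (metis add.right_neutral add_0)
next
  case (smult f c)
  then show ?case by (simp add: fa_smult_def)
next
  case (mult f g)
  then show ?case using fa_mul_supp_balanced by blast
qed

lemma gen_alg_an_bn_eq_0:
  assumes G: "\<forall>g\<in>G. \<forall>w. g w \<noteq> 0 \<longrightarrow> balanced w \<and> length w \<le> N"
    and "f \<in> gen_alg G" and "N < 2 * n"
  shows "f (an_bn n) = 0"
  using assms(2)
proof (induction rule: gen_alg.induct)
  case (gen g)
  then show ?case using G assms(3) by (force simp: an_bn_def)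
next
  case one
  show ?case using assms(3) by (simp add: mono_def an_bn_def)
next
  case (add f g)
  then show ?case by simp
next
  case (smult f c)
  then show ?case by (simp add: fa_smult_def)
next
  case (mult f g)
  have "\<forall>w. f w \<noteq> 0 \<longrightarrow> balanced w"
    using G \<open>f \<in> gen_alg G\<close> by (intro gen_alg_supp_balanced) auto
  then show ?case using mult.IH by (rule fa_mul_an_bn)
qed

lemma finite_FA_bounded_length:
  assumes "finite G" "G \<subseteq> FA"
  obtains N where "\<forall>g\<in>G. \<forall>w. g w \<noteq> 0 \<longrightarrow> length w \<le> N"
proof -
  define W where "W = (\<Union>g\<in>G. {w. g w \<noteq> 0})"
  have "finite W" using assms by (auto simp: W_def FA_def)
  then have "finite (length ` W)" by simp
  then obtain N where "\<forall>l\<in>length ` W. l \<le> N" using finite_nat_set_iff_bounded_le by blast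
  then show ?thesis using that by (auto simp: W_def)
qed

lemma sqrt_not_root_of_unity:
  fixes s q :: "'a::monoid_mult"
  assumes "s ^ 2 = q" "\<forall>d::nat. d \<ge> 1 \<longrightarrow> q ^ (2 * d) \<noteq> 1"
  shows "\<forall>d\<ge>1. s ^ d \<noteq> 1"
proof (intro allI impI notI)
  fix d :: nat assume "d \<ge> 1" "s ^ d = 1"
  have "q ^ (2 * d) = s ^ (2 * (2 * d))" unfolding assms(1)[symmetric] by (simp only: power_mult)
  also have "2 * (2 * d) = d * 4" by simp
  also have "s ^ (d * 4) = (s ^ d) ^ 4" by (rule power_mult)
  finally show False using assms(2) \<open>d \<ge> 1\<close> \<open>s ^ d = 1\<close> by simp
qed

theorem proposition6p1:
  fixes q s :: complex
  assumes "norm q = 1" and "q \<noteq> 1" and "q \<noteq> -1" and "q \<noteq> \<i>" and "q \<noteq> - \<i>"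
    and "s ^ 2 = q"
    and "\<forall>d::nat. d \<ge> 1 \<longrightarrow> q ^ (2 * d) \<noteq> 1"
  shows "\<not> (\<exists>G. finite G \<and> G \<subseteq> invariants s \<and> gen_alg G = invariants s)"
proof
  assume "\<exists>G. finite G \<and> G \<subseteq> invariants s \<and> gen_alg G = invariants s"
  then obtain G where "finite G" and sub: "G \<subseteq> invariants s" and gen: "gen_alg G = invariants s"
    by blast
  have "s \<noteq> 0" using assms(1,6) by auto
  have no_root: "\<forall>d\<ge>1. s ^ d \<noteq> 1" using assms(6,7) by (rule sqrt_not_root_of_unity)
  obtain N where "\<forall>g\<in>G. \<forall>w. g w \<noteq> 0 \<longrightarrow> length w \<le> N"
    using finite_FA_bounded_length \<open>finite G\<close> sub by (auto simp: invariants_def)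
  then have G: "\<forall>g\<in>G. \<forall>w. g w \<noteq> 0 \<longrightarrow> balanced w \<and> length w \<le> N"
    using sub invariant_supp_balanced[OF \<open>s \<noteq> 0\<close> no_root] by blast
  have "nested_invariant s (Suc N) \<in> gen_alg G"
    unfolding gen by (rule nested_invariant_in_invariants[OF \<open>s \<noteq> 0\<close>])
  then have "nested_invariant s (Suc N) (an_bn (Suc N)) = 0"
    by (rule gen_alg_an_bn_eq_0[OF G]) simp
  moreover have "nested_invariant s (Suc N) (an_bn (Suc N)) = s ^ (2 * Suc N)"
    by (rule nested_invariant_an_bn)
  ultimately show False using \<open>s \<noteq> 0\<close> by simp
qed

end
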